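(* Let $a,b,d<0$ and $c\ge c^+$, and let $\{W_n(z)\}_{n\ge0}$ be the normalised sequence defined below. Then $W_3(z)$ has exactly one negative zero. If moreover $W_3(z)$ has a positive real zero lying outside the interval $(x_g^-,x_g^+)$, then: $a>-1$; the quadratic $F(z)=A(z)^2+B(z)$ has a unique positive zero $x_0$; $W_3(z)$ has two zeros lying in the interval $\big(-b/(a+1),\,x_0\big)$; and \[ x_0<x_\Delta^+,\qquad c<\frac{b}{a+1}+\frac{a+1}{b}\,d,\qquad c^-<0 . \]
   Context: Let $a,b,c,d\in\mathbb{R}$ with $ac\ne0$, and put $A(z)=az+b$, $B(z)=cz+d$. The normalised sequence $\{W_n(z)\}_{n\ge0}$ is defined by $W_0(z)=1$, $W_1(z)=z$ and $W_n(z)=A(z)W_{n-1}(z)+B(z)W_{n-2}(z)$ for $n\ge2$. Notation: $\Delta_\Delta=-a^2d+abc+c^2$, $x_\Delta^+=\dfrac{-ab-2c+2\sqrt{\Delta_\Delta}}{a^2}$ (the larger zero of $A(z)^2+4B(z)$); $\Delta_g=(b+c)^2+4d(1-a)$, $x_g^\pm=\dfrac{b+c\pm\sqrt{\Delta_g}}{2(1-a)}$ (zeros of $g(z)=(1-a)z^2-(b+c)z-d$); $c^\pm=\pm2\sqrt{d(a-1)}-b$. *)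

theory Defs
  imports "HOL-Computational_Algebra.Polynomial"
begin

fun W :: "real \<Rightarrow> real \<Rightarrow> real \<Rightarrow> real \<Rightarrow> nat \<Rightarrow> real poly" where
  "W a b c d 0 = 1"
| "W a b c d (Suc 0) = [:0, 1:]"
| "W a b c d (Suc (Suc n)) = [:b, a:] * W a b c d (Suc n) + [:d, c:] * W a b c d n"

definition zero_count :: "real poly \<Rightarrow> real set \<Rightarrow> nat" where
  "zero_count p S = (\<Sum>x \<in> {x \<in> S. poly p x = 0}. order x p)"

definition Delta_Delta :: "real \<Rightarrow> real \<Rightarrow> real \<Rightarrow> real \<Rightarrow> real" where
  "Delta_Delta a b c d = - (a^2 * d) + a * b * c + c^2"

definition x_Delta_plus :: "real \<Rightarrow> real \<Rightarrow> real \<Rightarrow> real \<Rightarrow> real" where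
  "x_Delta_plus a b c d = (- a * b - 2 * c + 2 * sqrt (Delta_Delta a b c d)) / a^2"

definition Delta_g :: "real \<Rightarrow> real \<Rightarrow> real \<Rightarrow> real \<Rightarrow> real" where
  "Delta_g a b c d = (b + c)^2 + 4 * d * (1 - a)"

definition x_g_plus :: "real \<Rightarrow> real \<Rightarrow> real \<Rightarrow> real \<Rightarrow> real" where
  "x_g_plus a b c d = (b + c + sqrt (Delta_g a b c d)) / (2 * (1 - a))"

definition x_g_minus :: "real \<Rightarrow> real \<Rightarrow> real \<Rightarrow> real \<Rightarrow> real" where
  "x_g_minus a b c d = (b + c - sqrt (Delta_g a b c d)) / (2 * (1 - a))"

definition c_plus :: "real \<Rightarrow> real \<Rightarrow> real \<Rightarrow> real" where
  "c_plus a b d = 2 * sqrt (d * (a - 1)) - b"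

definition c_minus :: "real \<Rightarrow> real \<Rightarrow> real \<Rightarrow> real" where
  "c_minus a b d = - 2 * sqrt (d * (a - 1)) - b"

definition F_quad :: "real \<Rightarrow> real \<Rightarrow> real \<Rightarrow> real \<Rightarrow> real \<Rightarrow> real" where
  "F_quad a b c d z = (a * z + b)^2 + (c * z + d)"

end

(*
  W_3(z) = a^2 z^3 + (2ab + ac + c) z^2 + (ad + b^2 + bc + d) z + bd has W_3(0) = bd > 0, and
  c >= c^+ (i.e. b + c >= 2 sqrt (d (a - 1))) forces its two middle coefficients not to be both
  positive.  Dividing off a negative zero r therefore leaves a quadratic with positive constant and
  nonpositive linear coefficient, which has no negative zero: r is the only negative zero, and simple.

  For the second part write W_3(z) = z F(z) + A(z) B(z).  At a positive zero z with g(z) >= 0 this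
  forces B(z) < 0 < z + A(z) and F(z) < 0, hence a > -1 and F(0) = b^2 + d < 0, so F has a unique
  positive zero x_0 > z.  As W_3 = y^3 > 0 at y = -b/(a+1) (where A(y) = -y) and W_3 = -A^3 > 0 at
  x_0, both zeros of W_3 other than r lie in (y, x_0).  The bounds on x_0, c and c^- are read off
  from F(x_0) = 0, F(y) < 0 and b^2 + d < 0.
*)

theory Submission
  imports Defs
begin

lemma zero_count_superset:
  assumes "finite R" "{x \<in> S. poly p x = 0} \<subseteq> R" "R \<subseteq> S"
  shows "zero_count p S = (\<Sum>x\<in>R. order x p)"
  unfolding zero_count_def
  by (rule sum.mono_neutral_left) (use assms order_0I in \<open>fastforce+\<close>)

lemma zero_count_mult:
  fixes p q :: "real poly"
  assumes "p * q \<noteq> 0"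
  shows "zero_count (p * q) S = zero_count p S + zero_count q S"
proof -
  define R where "R = {x \<in> S. poly (p * q) x = 0}"
  have "finite R"
    using poly_roots_finite[OF assms] by (simp add: R_def)
  then have "zero_count p S = (\<Sum>x\<in>R. order x p)" "zero_count q S = (\<Sum>x\<in>R. order x q)"
    by (auto intro!: zero_count_superset simp: R_def)
  moreover have "zero_count (p * q) S = (\<Sum>x\<in>R. order x p + order x q)"
    using assms by (simp add: zero_count_def R_def order_mult)
  ultimately show ?thesis
    by (simp add: sum.distrib)
qed

lemma zero_count_linear: "zero_count [:-r, 1:] S = (if r \<in> S then 1 else 0)"
proof -
  have "{x \<in> S. poly [:-r, 1:] x = 0} = (if r \<in> S then {r} else {})"
    by auto
  moreover have "order r [:-r, 1:] = 1"
    using order_power_n_n[of r 1] by simp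
  ultimately show ?thesis
    by (simp add: zero_count_def)
qed

lemma zero_count_smult: "k \<noteq> 0 \<Longrightarrow> zero_count (smult k p) S = zero_count p S"
  by (simp add: zero_count_def order_smult)

lemma zero_count_eq_0:
  assumes "\<And>x. x \<in> S \<Longrightarrow> poly p x \<noteq> 0"
  shows "zero_count p S = 0"
  unfolding zero_count_def by (rule sum.neutral) (use assms in blast)

lemma cubic_factor_zero:
  fixes C0 C1 C2 k r :: "'a::comm_ring_1"
  assumes "poly [:C0, C1, C2, k:] r = 0"
  shows "[:C0, C1, C2, k:] = [:-r, 1:] * [:C1 + r * (C2 + r * k), C2 + r * k, k:]"
proof -
  have "C0 = - r * (C1 + r * (C2 + r * k))"
    using assms by (simp add: algebra_simps eq_neg_iff_add_eq_0)
  then show ?thesis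
    by (simp add: algebra_simps)
qed

lemma cubic_has_negative_zero:
  fixes C0 C1 C2 k :: real
  assumes "k > 0" "C0 > 0"
  obtains r where "r < 0" "poly [:C0, C1, C2, k:] r = 0"
proof -
  \<comment> \<open>the reflected polynomial \<open>- p(-x)\<close> has leading coefficient \<open>k\<close>\<close>
  obtain n where n: "\<And>x. x \<ge> n \<Longrightarrow> poly [:-C0, C1, -C2, k:] x \<ge> k"
    using poly_pinfty_gt_lc[of "[:-C0, C1, -C2, k:]"] assms(1) by auto
  define K where "K = max n 1"
  have reflect: "poly [:C0, C1, C2, k:] (-K) = - poly [:-C0, C1, -C2, k:] K"
    by (simp add: algebra_simps)
  have "poly [:-C0, C1, -C2, k:] K \<ge> k"
    by (rule n) (simp add: K_def)
  then have "poly [:C0, C1, C2, k:] (-K) < 0"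
    using reflect assms(1) by linarith
  moreover have "-K < 0" "poly [:C0, C1, C2, k:] 0 > 0"
    using assms(2) by (simp_all add: K_def)
  ultimately show thesis
    using poly_IVT_pos that by blast
qed

lemma cubic_negative_zero_factor:
  fixes C0 C1 C2 k :: real
  assumes "k > 0" "C0 > 0" "\<not> (C1 > 0 \<and> C2 > 0)"
  obtains r q0 q1 where "r < 0" "q0 > 0" "q1 \<le> 0"
    "[:C0, C1, C2, k:] = [:-r, 1:] * [:q0, q1, k:]"
proof -
  obtain r where r: "r < 0" "poly [:C0, C1, C2, k:] r = 0"
    using cubic_has_negative_zero assms(1,2) by blast
  define q1 where "q1 = C2 + r * k"
  define q0 where "q0 = C1 + r * q1"
  have p: "[:C0, C1, C2, k:] = [:-r, 1:] * [:q0, q1, k:]"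
    using cubic_factor_zero[OF r(2)] by (simp add: q0_def q1_def)
  then have "C0 = - r * q0"
    by simp
  then have "0 < (-r) * q0"
    using assms(2) by simp
  then have "q0 > 0"
    using r(1) by (auto simp: mult_less_0_iff)
  moreover have "q1 \<le> 0"
  proof (rule ccontr)
    assume "\<not> q1 \<le> 0"
    then have "r * k < 0" "r * q1 < 0"
      using r(1) assms(1) by (simp_all add: mult_neg_pos)
    then have "C2 > 0" "C1 > 0"
      using \<open>\<not> q1 \<le> 0\<close> \<open>q0 > 0\<close> by (simp_all add: q0_def q1_def)
    then show False
      using assms(3) by blast
  qed
  ultimately show thesis
    using that r(1) p by blast
qed

lemma cubic_unique_negative_zero:
  fixes C0 C1 C2 k :: real
  assumes "k > 0" "C0 > 0" "\<not> (C1 > 0 \<and> C2 > 0)"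
  shows "zero_count [:C0, C1, C2, k:] {..<0} = 1"
proof -
  obtain r q0 q1 where rq: "r < 0" "q0 > 0" "q1 \<le> 0"
    and p: "[:C0, C1, C2, k:] = [:-r, 1:] * [:q0, q1, k:]"
    using cubic_negative_zero_factor[OF assms] .
  have pos: "poly [:q0, q1, k:] x > 0" if "x < 0" for x
  proof -
    have "q1 * x \<ge> 0" "k * x^2 \<ge> 0"
      using that rq(3) assms(1) by (simp_all add: mult_nonpos_nonpos)
    then show ?thesis
      using rq(2) by (simp add: algebra_simps power2_eq_square)
  qed
  then have "zero_count [:q0, q1, k:] {..<0} = 0"
    by (intro zero_count_eq_0) (use pos in force)
  moreover have "[:-r, 1:] * [:q0, q1, k:] \<noteq> 0"
    using assms(1) by auto
  ultimately show ?thesis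
    unfolding p zero_count_mult[OF \<open>[:-r, 1:] * [:q0, q1, k:] \<noteq> 0\<close>] zero_count_linear
    using rq(1) by simp
qed

lemma quadratic_two_zeros_between:
  fixes q0 q1 k :: real
  assumes "k > 0" "poly [:q0, q1, k:] z = 0" "y < z" "z < x"
    and "poly [:q0, q1, k:] y > 0" "poly [:q0, q1, k:] x > 0"
  shows "zero_count [:q0, q1, k:] {y<..<x} = 2"
proof -
  define w where "w = - q1 / k - z"
  have q: "poly [:q0, q1, k:] t = k * ((t - z) * (t - w))" for t
  proof -
    have q0: "q0 = - q1 * z - k * z^2"
      using assms(2) by (simp add: algebra_simps power2_eq_square)
    show ?thesis
      unfolding q0 w_def using assms(1) by (simp add: field_simps power2_eq_square)
  qed
  have "0 < k * ((y - z) * (y - w))" "0 < k * ((x - z) * (x - w))"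
    using assms(5,6) unfolding q .
  then have "(y - z) * (y - w) > 0" "(x - z) * (x - w) > 0"
    using assms(1) by (simp_all add: zero_less_mult_iff)
  then have "y < w" "w < x"
    using assms(3,4) by (auto simp: zero_less_mult_iff)
  have factor: "[:q0, q1, k:] = smult k ([:-z, 1:] * [:-w, 1:])"
    by (rule poly_ext) (subst q, simp add: algebra_simps)
  have "[:-z, 1:] * [:-w, 1:] \<noteq> (0 :: real poly)"
    by simp
  then show ?thesis
    unfolding factor zero_count_smult[OF less_imp_neq[OF assms(1), symmetric]]
      zero_count_mult[OF \<open>[:-z, 1:] * [:-w, 1:] \<noteq> 0\<close>] zero_count_linear
    using assms(3,4) \<open>y < w\<close> \<open>w < x\<close> by simp
qed

lemma cubic_two_zeros_between:
  fixes C0 C1 C2 k :: real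
  assumes "k > 0" "C0 > 0" "\<not> (C1 > 0 \<and> C2 > 0)"
    and "poly [:C0, C1, C2, k:] z = 0" "0 \<le> y" "y < z" "z < x"
    and "poly [:C0, C1, C2, k:] y > 0" "poly [:C0, C1, C2, k:] x > 0"
  shows "zero_count [:C0, C1, C2, k:] {y<..<x} = 2"
proof -
  obtain r q0 q1 where "r < 0"
    and p: "[:C0, C1, C2, k:] = [:-r, 1:] * [:q0, q1, k:]"
    using cubic_negative_zero_factor[OF assms(1-3)] .
  have val: "poly [:C0, C1, C2, k:] t = (t - r) * poly [:q0, q1, k:] t" for t
    unfolding p by (simp add: algebra_simps)
  have "poly [:q0, q1, k:] z = 0" "poly [:q0, q1, k:] y > 0" "poly [:q0, q1, k:] x > 0"
    using assms(4-9) \<open>r < 0\<close> unfolding val by (simp_all add: zero_less_mult_iff)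
  then have "zero_count [:q0, q1, k:] {y<..<x} = 2"
    using quadratic_two_zeros_between assms(1,6,7) by blast
  moreover have "[:-r, 1:] * [:q0, q1, k:] \<noteq> 0"
    using assms(1) by auto
  ultimately show ?thesis
    unfolding p zero_count_mult[OF \<open>[:-r, 1:] * [:q0, q1, k:] \<noteq> 0\<close>] zero_count_linear
    using \<open>r < 0\<close> assms(5) by simp
qed

lemma quadratic_has_positive_zero:
  fixes q0 q1 k :: real
  assumes "k > 0" "q0 < 0"
  obtains x0 where "x0 > 0" "poly [:q0, q1, k:] x0 = 0"
proof -
  obtain n where n: "\<And>x. x \<ge> n \<Longrightarrow> poly [:q0, q1, k:] x \<ge> k"
    using poly_pinfty_gt_lc[of "[:q0, q1, k:]"] assms(1) by auto
  have "poly [:q0, q1, k:] (max n 1) > 0"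
    using n[of "max n 1"] assms(1) by simp
  moreover have "poly [:q0, q1, k:] 0 < 0"
    using assms(2) by simp
  ultimately show thesis
    using poly_IVT_pos[of 0 "max n 1"] that by fastforce
qed

lemma quadratic_sign_right_of_zero:
  fixes q0 q1 k x0 x :: real
  assumes "q0 < 0" "k \<ge> 0" "x0 > 0" "poly [:q0, q1, k:] x0 = 0" "x \<ge> 0"
  shows "poly [:q0, q1, k:] x < 0 \<longleftrightarrow> x < x0" "poly [:q0, q1, k:] x = 0 \<longleftrightarrow> x = x0"
proof -
  have q1: "q1 * x0 = - q0 - k * x0^2"
    using assms(4) by (simp add: algebra_simps power2_eq_square)
  have "poly [:q0, q1, k:] x * x0 = q0 * x0 + x * (q1 * x0) + k * x^2 * x0"
    by (simp add: algebra_simps power2_eq_square)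
  also have "\<dots> = (x - x0) * (k * x * x0 - q0)"
    unfolding q1 by (simp add: algebra_simps power2_eq_square)
  finally have factor: "poly [:q0, q1, k:] x * x0 = (x - x0) * (k * x * x0 - q0)" .
  have "k * x * x0 \<ge> 0"
    using assms(2,3,5) by simp
  then have "k * x * x0 - q0 > 0"
    using assms(1) by linarith
  then have "poly [:q0, q1, k:] x * x0 < 0 \<longleftrightarrow> x < x0"
    "poly [:q0, q1, k:] x * x0 = 0 \<longleftrightarrow> x = x0"
    unfolding factor by (simp_all add: mult_less_0_iff)
  then show "poly [:q0, q1, k:] x < 0 \<longleftrightarrow> x < x0" "poly [:q0, q1, k:] x = 0 \<longleftrightarrow> x = x0"
    using assms(3) by (simp_all add: mult_less_0_iff)
qed

lemma W3_eq: "W a b c d 3 = [:b*d, a*d + b^2 + b*c + d, 2*a*b + a*c + c, a^2:]"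
  by (simp add: eval_nat_numeral algebra_simps power2_eq_square)

lemma poly_W3: "poly (W a b c d 3) x = x * F_quad a b c d x + (a*x + b) * (c*x + d)"
  by (simp add: W3_eq F_quad_def algebra_simps power2_eq_square power3_eq_cube)

lemma F_quad_eq: "F_quad a b c d x = poly [:b^2 + d, 2*a*b + c, a^2:] x"
  by (simp add: F_quad_def algebra_simps power2_eq_square)

lemma c_plus_leD:
  fixes a b c d :: real
  assumes "a < 0" "d < 0" "c_plus a b d \<le> c"
  shows "b + c > 0" "Delta_g a b c d \<ge> 0"
proof -
  have "d * (a - 1) > 0"
    using assms(1,2) by (simp add: mult_neg_neg)
  then have root: "sqrt (d * (a - 1)) > 0"
    by simp
  have le: "2 * sqrt (d * (a - 1)) \<le> b + c"
    using assms(3) by (simp add: c_plus_def)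
  show "b + c > 0"
    using root le by linarith
  have "4 * (d * (a - 1)) \<le> (b + c)^2"
    using power_mono[OF le, of 2] root \<open>d * (a - 1) > 0\<close> by (simp add: power_mult_distrib)
  then show "Delta_g a b c d \<ge> 0"
    by (simp add: Delta_g_def algebra_simps)
qed

lemma W3_middle_coeffs_not_both_pos:
  fixes a b c d :: real
  assumes "a < 0" "b < 0" "d < 0" "b + c > 0" "Delta_g a b c d \<ge> 0"
  shows "\<not> (a*d + b^2 + b*c + d > 0 \<and> 2*a*b + a*c + c > 0)"
proof
  define s where "s = b + c"
  assume "a*d + b^2 + b*c + d > 0 \<and> 2*a*b + a*c + c > 0"
  then have C1: "d * (a + 1) + b * s > 0" and C2: "b * (a - 1) + s * (a + 1) > 0"
    by (simp_all add: s_def algebra_simps power2_eq_square)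
  have "b * s < 0"
    using assms(2,4) by (simp add: s_def mult_neg_pos)
  then have "a + 1 < 0"
    using C1 assms(3) by (smt (verit) mult_nonpos_nonneg)
  define t where "t = - (a + 1)"
  have "t > 0"
    using \<open>a + 1 < 0\<close> by (simp add: t_def)
  \<comment> \<open>multiplying the two coefficient inequalities gives \<open>s^2 < d (a - 1)\<close>, against \<open>\<Delta>\<^sub>g \<ge> 0\<close>\<close>
  have "(-b) * s < (-d) * t" "s * t < (-b) * (1 - a)"
    using C1 C2 by (simp_all add: t_def algebra_simps)
  then have "((-b) * s) * (s * t) < ((-d) * t) * ((-b) * (1 - a))"
    by (rule mult_strict_mono) (use assms(3,4) \<open>t > 0\<close> in \<open>simp_all add: s_def mult_neg_pos\<close>)
  then have "((-b) * t) * s^2 < ((-b) * t) * ((-d) * (1 - a))"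
    by (simp add: power2_eq_square algebra_simps)
  moreover have "(-b) * t > 0"
    using assms(2) \<open>t > 0\<close> by (simp add: mult_neg_pos)
  ultimately have "s^2 < (-d) * (1 - a)"
    using mult_less_cancel_left_pos by blast
  moreover have "(-d) * (1 - a) > 0"
    using assms(1,3) by (simp add: mult_neg_pos)
  ultimately show False
    using assms(5) by (simp add: Delta_g_def s_def algebra_simps)
qed

lemma g_nonneg_outside_zeros:
  fixes a b c d z :: real
  assumes "a < 1" "Delta_g a b c d \<ge> 0"
    and "z \<le> x_g_minus a b c d \<or> x_g_plus a b c d \<le> z"
  shows "(1 - a) * z^2 - (b + c) * z - d \<ge> 0"
proof -
  define u where "u = 1 - a"
  define s where "s = b + c"
  define r where "r = sqrt (Delta_g a b c d)"
  have "u > 0" "r \<ge> 0" "r^2 = s^2 + 4 * d * u"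
    using assms(1,2) by (simp_all add: u_def s_def r_def Delta_g_def)
  then have factor: "(2*u*z - (s - r)) * (2*u*z - (s + r)) = 4 * u * ((1 - a) * z^2 - (b + c) * z - d)"
    by (simp add: u_def s_def algebra_simps power2_eq_square)
  have "2*u*z \<le> s - r \<or> s + r \<le> 2*u*z"
    using assms(3) \<open>u > 0\<close>
    by (auto simp: x_g_minus_def x_g_plus_def u_def s_def r_def field_simps)
  then have "(2*u*z - (s - r)) * (2*u*z - (s + r)) \<ge> 0"
    using \<open>r \<ge> 0\<close> by (auto intro: mult_nonpos_nonpos)
  then show ?thesis
    using \<open>u > 0\<close> unfolding factor by (simp add: zero_le_mult_iff)
qed

lemma W3_positive_zero_g_nonneg:
  fixes a b c d z :: real
  assumes "a < 0" "b < 0" "z > 0" "poly (W a b c d 3) z = 0"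
    and "(1 - a) * z^2 - (b + c) * z - d \<ge> 0"
  shows "z + (a*z + b) > 0" "F_quad a b c d z < 0"
proof -
  define A where "A = a*z + b"
  define B where "B = c*z + d"
  have zero: "z * A^2 + B * (z + A) = 0"
    using assms(4) by (simp add: poly_W3 F_quad_def A_def B_def algebra_simps)
  have g: "B \<le> z^2 - A * z"
    using assms(5) by (simp add: A_def B_def algebra_simps power2_eq_square)
  have "A < 0"
    using assms(1-3) by (simp add: A_def mult_neg_pos add_neg_neg)
  then have "z * A^2 > 0"
    using assms(3) by simp
  then have BzA: "B * (z + A) < 0"
    using zero by linarith
  have "B < 0"
  proof (rule ccontr)
    assume "\<not> B < 0"
    then have "z + A < 0"
      using BzA by (auto simp: mult_less_0_iff)
    \<comment> \<open>multiplying \<open>g\<close> by \<open>-(z + A) > 0\<close> turns \<open>zero\<close> into \<open>z^3 \<le> 0\<close>\<close>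
    then have "B * (- (z + A)) \<le> (z^2 - A * z) * (- (z + A))"
      using g by (intro mult_right_mono) auto
    then have "z^3 \<le> 0"
      using zero by (simp add: algebra_simps power2_eq_square power3_eq_cube)
    then show False
      using assms(3) by simp
  qed
  then have "z + A > 0"
    using BzA by (simp add: mult_less_0_iff)
  then show "z + (a*z + b) > 0"
    by (simp add: A_def)
  have "A * A^2 < 0"
    using \<open>A < 0\<close> by (simp add: mult_neg_pos)
  then have "B * (z + A) < - (A^2) * (z + A)"
    using zero by (simp add: algebra_simps power2_eq_square)
  then have "B < - (A^2)"
    using \<open>z + A > 0\<close> mult_less_cancel_right_pos by blast
  then have "A^2 + B < 0"
    by simp
  then show "F_quad a b c d z < 0"
    by (simp add: F_quad_def A_def B_def)
qed

lemma F_quad_0_le: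
  fixes a b c d z :: real
  assumes "a \<le> 0" "b \<le> 0" "c \<ge> 0" "z \<ge> 0"
  shows "F_quad a b c d 0 \<le> F_quad a b c d z"
proof -
  have "a*z + b \<le> b"
    using assms(1,4) by (simp add: mult_nonpos_nonneg)
  then have "b^2 \<le> (a*z + b)^2"
    using assms(2) by (simp add: abs_le_square_iff[symmetric])
  moreover have "c * z \<ge> 0"
    using assms(3,4) by simp
  ultimately show ?thesis
    by (simp add: F_quad_def)
qed

lemma poly_W3_at_F_quad_zero:
  assumes "F_quad a b c d x = 0"
  shows "poly (W a b c d 3) x = - ((a*x + b)^3)"
proof -
  have "c*x + d = - ((a*x + b)^2)"
    using assms by (simp add: F_quad_def eq_neg_iff_add_eq_0)
  then show ?thesis
    by (simp add: poly_W3 assms power2_eq_square power3_eq_cube)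
qed

lemma poly_W3_at_A_eq_neg: "a*y + b = - y \<Longrightarrow> poly (W a b c d 3) y = y^3"
  by (simp add: poly_W3 F_quad_def algebra_simps power2_eq_square power3_eq_cube)

lemma F_quad_zero_lt_x_Delta_plus:
  fixes a b c d x :: real
  assumes "a \<noteq> 0" "a*x + b \<noteq> 0" "F_quad a b c d x = 0"
  shows "x < x_Delta_plus a b c d"
proof -
  define u where "u = a^2 * x + a*b + 2*c"
  define D where "D = Delta_Delta a b c d"
  have B: "c*x + d = - ((a*x + b)^2)"
    using assms(3) by (simp add: F_quad_def eq_neg_iff_add_eq_0)
  have "u^2 - 4 * D = a^2 * ((a*x + b)^2 + 4 * (c*x + d))"
    by (simp add: u_def D_def Delta_Delta_def algebra_simps power2_eq_square)
  also have "\<dots> = - (3 * a^2 * (a*x + b)^2)"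
    unfolding B by simp
  also have "\<dots> < 0"
    using assms(1,2) by simp
  finally have "u < sqrt (4 * D)"
    by (intro real_less_rsqrt) simp
  then have "a^2 * x < - a * b - 2 * c + 2 * sqrt D"
    by (simp add: u_def real_sqrt_mult)
  then show ?thesis
    using assms(1) by (simp add: x_Delta_plus_def D_def pos_less_divide_eq mult.commute)
qed

lemma c_lt_from_F_quad_neg:
  fixes a b c d :: real
  assumes "a + 1 > 0" "b < 0" "F_quad a b c d (- b / (a + 1)) < 0"
  shows "c < b / (a + 1) + (a + 1) / b * d"
proof -
  define y where "y = - b / (a + 1)"
  have "y > 0" "a*y + b = - y" "b / (a + 1) = - y" "(a + 1) / b = - 1 / y"
    using assms(1,2) by (simp_all add: y_def divide_neg_pos field_simps)
  have "y * c < y * (- y - d / y)"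
    using assms(3) \<open>y > 0\<close>
    unfolding y_def[symmetric] F_quad_def \<open>a*y + b = - y\<close> by (simp add: algebra_simps power2_eq_square)
  then have "c < - y - d / y"
    using \<open>y > 0\<close> by simp
  then show ?thesis
    unfolding \<open>b / (a + 1) = - y\<close> \<open>(a + 1) / b = - 1 / y\<close> by simp
qed

lemma c_minus_neg:
  fixes a b d :: real
  assumes "a < 0" "b^2 + d < 0"
  shows "c_minus a b d < 0"
proof -
  have "d < 0"
    using assms(2) zero_le_power2[of b] by linarith
  then have "- d \<le> d * (a - 1)"
    using assms(1) by (simp add: algebra_simps mult_nonpos_nonpos)
  then have "b^2 < 4 * (d * (a - 1))"
    using assms(2) zero_le_power2[of b] by linarith
  then have "(- b / 2)^2 < d * (a - 1)"
    by (simp add: power_divide)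
  then have "- b / 2 < sqrt (d * (a - 1))"
    by (rule real_less_rsqrt)
  then show ?thesis
    by (simp add: c_minus_def)
qed

lemma W3_coeffs_sign:
  fixes a b c d :: real
  assumes "a < 0" "b < 0" "d < 0" "c_plus a b d \<le> c"
  shows "a^2 > 0" "b * d > 0" "\<not> (a*d + b^2 + b*c + d > 0 \<and> 2*a*b + a*c + c > 0)"
  using assms W3_middle_coeffs_not_both_pos c_plus_leD by (simp_all add: mult_neg_neg)

lemma F_quad_positive_zero:
  fixes a b c d :: real
  assumes "a \<noteq> 0" "b^2 + d < 0"
  obtains x0 where "x0 > 0" "F_quad a b c d x0 = 0"
    "\<And>x. x \<ge> 0 \<Longrightarrow> F_quad a b c d x < 0 \<longleftrightarrow> x < x0"
    "\<And>x. x \<ge> 0 \<Longrightarrow> F_quad a b c d x = 0 \<longleftrightarrow> x = x0"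
proof -
  have "a^2 > 0"
    using assms(1) by simp
  then obtain x0 where "x0 > 0" "poly [:b^2 + d, 2*a*b + c, a^2:] x0 = 0"
    using quadratic_has_positive_zero assms(2) by blast
  then show thesis
    using that quadratic_sign_right_of_zero[OF assms(2) _ \<open>x0 > 0\<close>] unfolding F_quad_eq by simp
qed

lemma W3_zero_count_between:
  fixes a b c d z x0 :: real
  assumes "a < 0" "b < 0" "d < 0" "c_plus a b d \<le> c" "a + 1 > 0"
    and "poly (W a b c d 3) z = 0" "- b / (a + 1) < z" "z < x0" "F_quad a b c d x0 = 0"
  shows "zero_count (W a b c d 3) {- b / (a + 1)<..<x0} = 2"
proof -
  define y where "y = - b / (a + 1)"
  have "y > 0" "a*y + b = - y"
    using assms(2,5) by (simp_all add: y_def divide_neg_pos field_simps)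
  then have "poly (W a b c d 3) y > 0"
    by (simp add: poly_W3_at_A_eq_neg)
  moreover have "a * x0 + b < 0"
    using assms(1,2,7,8) \<open>y > 0\<close> by (simp add: y_def mult_neg_pos add_neg_neg)
  then have "poly (W a b c d 3) x0 > 0"
    using assms(9) by (simp add: poly_W3_at_F_quad_zero power_less_zero_eq)
  ultimately show ?thesis
    using cubic_two_zeros_between W3_coeffs_sign[OF assms(1-4)] assms(6-8) \<open>y > 0\<close>
    unfolding y_def W3_eq by simp
qed

lemma W3_positive_zero_outside_x_gD:
  fixes a b c d z :: real
  assumes "a < 0" "b < 0" "d < 0" "c_plus a b d \<le> c"
    and "z > 0" "poly (W a b c d 3) z = 0" "z \<le> x_g_minus a b c d \<or> x_g_plus a b c d \<le> z"
  shows "a + 1 > 0" "- b / (a + 1) < z" "F_quad a b c d z < 0" "b^2 + d < 0"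
proof -
  have "b + c > 0" "Delta_g a b c d \<ge> 0"
    using c_plus_leD assms(1,3,4) by auto
  then have "z + (a*z + b) > 0" and F_neg: "F_quad a b c d z < 0"
    using W3_positive_zero_g_nonneg[OF assms(1,2,5,6)] g_nonneg_outside_zeros[OF _ _ assms(7)] assms(1)
    by auto
  then have "- b < (a + 1) * z"
    by (simp add: algebra_simps)
  then have "(a + 1) * z > 0"
    using assms(2) by linarith
  then show "a + 1 > 0"
    using assms(5) by (simp add: zero_less_mult_iff)
  then show "- b / (a + 1) < z"
    unfolding pos_divide_less_eq[OF \<open>a + 1 > 0\<close>] using \<open>- b < (a + 1) * z\<close>
    by (metis mult.commute)
  show "F_quad a b c d z < 0"
    by (fact F_neg)
  have "F_quad a b c d 0 < 0"
    using F_quad_0_le[of a b c z d] F_neg \<open>b + c > 0\<close> assms(1,2,5) by simp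
  then show "b^2 + d < 0"
    by (simp add: F_quad_def)
qed

lemma W3_positive_zero_outside_x_g:
  fixes a b c d z :: real
  assumes "a < 0" "b < 0" "d < 0" "c_plus a b d \<le> c"
    and "z > 0" "poly (W a b c d 3) z = 0" "z \<le> x_g_minus a b c d \<or> x_g_plus a b c d \<le> z"
  shows "a > -1" "\<exists>!x0. x0 > 0 \<and> F_quad a b c d x0 = 0"
    "\<forall>x0. x0 > 0 \<and> F_quad a b c d x0 = 0 \<longrightarrow>
       zero_count (W a b c d 3) {- b / (a + 1)<..<x0} = 2 \<and> x0 < x_Delta_plus a b c d"
    "c < b / (a + 1) + (a + 1) / b * d" "c_minus a b d < 0"
proof -
  note basic = W3_positive_zero_outside_x_gD[OF assms]
  then show "a > -1"
    by simp
  show "c_minus a b d < 0"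
    using c_minus_neg assms(1) basic(4) by blast
  have "a \<noteq> 0"
    using assms(1) by simp
  obtain x0 where "x0 > 0" "F_quad a b c d x0 = 0"
    and F_neg: "\<And>x. x \<ge> 0 \<Longrightarrow> F_quad a b c d x < 0 \<longleftrightarrow> x < x0"
    and F_zero: "\<And>x. x \<ge> 0 \<Longrightarrow> F_quad a b c d x = 0 \<longleftrightarrow> x = x0"
    using F_quad_positive_zero[where c = c, OF \<open>a \<noteq> 0\<close> basic(4)] by blast
  have unique: "x > 0 \<and> F_quad a b c d x = 0 \<longleftrightarrow> x = x0" for x
    using F_zero[of x] \<open>x0 > 0\<close> \<open>F_quad a b c d x0 = 0\<close> by auto
  then show "\<exists>!x0. x0 > 0 \<and> F_quad a b c d x0 = 0"
    by (intro ex1I[of _ x0]) simp_all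
  have "z < x0"
    using F_neg[of z] basic(3) assms(5) by simp
  have "- b / (a + 1) > 0"
    using basic(1) assms(2) by (simp add: divide_neg_pos)
  then have "F_quad a b c d (- b / (a + 1)) < 0"
    using F_neg basic(2) \<open>z < x0\<close> by simp
  then show "c < b / (a + 1) + (a + 1) / b * d"
    using c_lt_from_F_quad_neg basic(1) assms(2) by blast
  have "zero_count (W a b c d 3) {- b / (a + 1)<..<x0} = 2"
    by (rule W3_zero_count_between[OF assms(1-4) basic(1) assms(6) basic(2) \<open>z < x0\<close>
          \<open>F_quad a b c d x0 = 0\<close>])
  moreover have "a * x0 + b < 0"
    using assms(1,2) \<open>x0 > 0\<close> by (simp add: mult_neg_pos add_neg_neg)
  then have "x0 < x_Delta_plus a b c d"
    using F_quad_zero_lt_x_Delta_plus[OF \<open>a \<noteq> 0\<close> _ \<open>F_quad a b c d x0 = 0\<close>] by simp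
  ultimately show "\<forall>x0. x0 > 0 \<and> F_quad a b c d x0 = 0 \<longrightarrow>
       zero_count (W a b c d 3) {- b / (a + 1)<..<x0} = 2 \<and> x0 < x_Delta_plus a b c d"
    using unique by simp
qed

theorem theorem4p3:
  fixes a b c d :: real
  assumes "a < 0" and "b < 0" and "d < 0"
    and "c \<ge> c_plus a b d"
  shows "zero_count (W a b c d 3) {..<0} = 1 \<and>
    ((\<exists>z>0. poly (W a b c d 3) z = 0 \<and>
        (z \<le> x_g_minus a b c d \<or> z \<ge> x_g_plus a b c d)) \<longrightarrow>
      a > -1 \<and>
      (\<exists>!x0. x0 > 0 \<and> F_quad a b c d x0 = 0) \<and>
      (\<forall>x0. x0 > 0 \<and> F_quad a b c d x0 = 0 \<longrightarrow>
         zero_count (W a b c d 3) {- b / (a + 1)<..<x0} = 2 \<and>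
         x0 < x_Delta_plus a b c d) \<and>
      c < b / (a + 1) + (a + 1) / b * d \<and>
      c_minus a b d < 0)"
proof -
  have "zero_count (W a b c d 3) {..<0} = 1"
    unfolding W3_eq using cubic_unique_negative_zero W3_coeffs_sign[OF assms] by blast
  moreover have "a > -1 \<and>
      (\<exists>!x0. x0 > 0 \<and> F_quad a b c d x0 = 0) \<and>
      (\<forall>x0. x0 > 0 \<and> F_quad a b c d x0 = 0 \<longrightarrow>
         zero_count (W a b c d 3) {- b / (a + 1)<..<x0} = 2 \<and>
         x0 < x_Delta_plus a b c d) \<and>
      c < b / (a + 1) + (a + 1) / b * d \<and>
      c_minus a b d < 0"
    if "z > 0" "poly (W a b c d 3) z = 0" "z \<le> x_g_minus a b c d \<or> z \<ge> x_g_plus a b c d" for z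
    using W3_positive_zero_outside_x_g[OF assms that] by (intro conjI)
  ultimately show ?thesis
    by blast
qed

end
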